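(* Let $\ell\geq 1$ be an integer, $m=2\ell+1$, $u=(3^m+1)/2$ and $v=2\cdot 3^{\ell}+1$. Let $\pi$ be a generator of $\mathrm{GF}(3^m)^*$, and let $\mathcal{C}_{(u,v)}$ be the cyclic code of length $3^m-1$ over $\mathrm{GF}(3)$ with generator polynomial $m_u(x)m_v(x)$. Then $\pi^u$ and $\pi^v$ are not conjugate over $\mathrm{GF}(3)$, and $\mathcal{C}_{(u,v)}$ has parameters $[3^m-1,\,3^m-1-2m,\,4]$, i.e. it has dimension $3^m-1-2m$ and minimum Hamming distance exactly $4$. (In particular it is optimal: by the Sphere Packing bound no linear code over $\mathrm{GF}(3)$ of length $3^m-1$ and dimension $3^m-1-2m$ has minimum distance greater than $4$.)
   Context: $\mathrm{GF}(q)$ denotes the finite field with $q$ elements. For $0\le i\le 3^m-2$, $m_i(x)$ denotes the minimal polynomial of $\pi^i$ over $\mathrm{GF}(3)$. A cyclic code of length $n$ over $\mathrm{GF}(3)$ is identified with an ideal of $\mathrm{GF}(3)[x]/(x^n-1)$, and the code with generator polynomial $g(x)$ (a divisor of $x^n-1$) is the ideal $\langle g(x)\rangle$, i.e. the set of vectors $(c_0,\dots,c_{n-1})\in\mathrm{GF}(3)^n$ such that $g(x)$ divides $\sum_i c_ix^i$. Equivalently here, $\mathcal{C}_{(u,v)}=\{(c_0,\dots,c_{3^m-2})\in\mathrm{GF}(3)^{3^m-1}:\ \sum_i c_i\pi^{ui}=0,\ \sum_i c_i\pi^{vi}=0\}$. An $[n,k,d]$ code is a linear code of length $n$, dimension $k$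 and minimum Hamming distance $d$. *)

theory Defs
  imports Main
begin

definition prime_subfield :: "'a::field set" where
  "prime_subfield = range (of_nat :: nat \<Rightarrow> 'a)"

definition is_primitive :: "'a::field \<Rightarrow> bool" where
  "is_primitive p \<longleftrightarrow> p \<noteq> 0 \<and> (\<forall>x. x \<noteq> 0 \<longrightarrow> (\<exists>k::nat. x = p ^ k))"

text \<open>The cyclic code C_(u,v) of length n = 3^m - 1 with generator polynomial m_u(x) m_v(x),
  described by its zeros pi^u and pi^v.\<close>
definition cyclic_code_uv :: "nat \<Rightarrow> 'a::field \<Rightarrow> nat \<Rightarrow> nat \<Rightarrow> (nat \<Rightarrow> 'a) set" where
  "cyclic_code_uv n p u v =
     {c. (\<forall>i. c i \<in> prime_subfield) \<and> (\<forall>i\<ge>n. c i = 0) \<and>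
         (\<Sum>i<n. c i * p ^ (u * i)) = 0 \<and> (\<Sum>i<n. c i * p ^ (v * i)) = 0}"

definition hamming_dist :: "nat \<Rightarrow> (nat \<Rightarrow> 'a) \<Rightarrow> (nat \<Rightarrow> 'a) \<Rightarrow> nat" where
  "hamming_dist n c d = card {i. i < n \<and> c i \<noteq> d i}"

definition min_dist :: "nat \<Rightarrow> (nat \<Rightarrow> 'a) set \<Rightarrow> nat" where
  "min_dist n C = Min {hamming_dist n c d | c d. c \<in> C \<and> d \<in> C \<and> c \<noteq> d}"

definition conjugate_GF3 :: "'a::field \<Rightarrow> 'a \<Rightarrow> bool" where
  "conjugate_GF3 x y \<longleftrightarrow> (\<exists>j::nat. y = x ^ (3 ^ j))"

end

theory Submission
  imports Defs "HOL-Library.FuncSet" "HOL-Library.Function_Algebras"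
    "HOL-Library.Product_Plus"
    "HOL-Computational_Algebra.Polynomial" "HOL-Computational_Algebra.Primes"
begin

text \<open>Write \<open>n = 3^m - 1\<close>, \<open>L = 3^l\<close> and \<open>K = n/2\<close>, so \<open>u = K + 1\<close> and \<open>v = 2L + 1\<close>.
  Since \<open>\<pi>^K = -1\<close> we have \<open>\<pi>^u = -\<pi>\<close>, and \<open>-\<pi>^(3^j) = \<pi>^(K + 3^j)\<close> has an exponent strictly
  between \<open>v\<close> and \<open>v + n\<close>, so \<open>\<pi>^u\<close> and \<open>\<pi>^v\<close> are not conjugate.

  The dimension is \<open>n - 2m\<close> because the syndrome map \<open>c \<mapsto> (c(\<pi>^u), c(\<pi>^v))\<close> on ternary words
  is onto \<open>GF(3^m)\<^sup>2\<close>: its image is a group, stable under cyclic shifts and signs; it meets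
  every fibre of the second projection because \<open>v\<close> is invertible modulo \<open>n\<close>; and it contains
  some \<open>(a, 0)\<close> with \<open>a \<noteq> 0\<close>, since a nonzero ternary polynomial of degree at most \<open>m\<close> cannot
  vanish at \<open>\<pi>^u = -\<pi>\<close> and at the \<open>m\<close> conjugates of \<open>\<pi>^v\<close>.

  A codeword of weight at most three is a relation \<open>\<Sum> \<epsilon>\<^sub>i a\<^sub>i^u = \<Sum> \<epsilon>\<^sub>i a\<^sub>i^v = 0\<close> with
  signs \<open>\<epsilon>\<^sub>i\<close>. With \<open>z\<^sub>i = \<epsilon>\<^sub>i a\<^sub>i^u\<close> it becomes \<open>\<Sum> z\<^sub>i = 0\<close>,
  \<open>\<Sum> a\<^sub>i^K z\<^sub>i^v = 0\<close>; as \<open>x^v = x (x^L)\<^sup>2\<close> and \<open>x \<mapsto> x^L\<close> is additive, this forces two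
  of the \<open>a\<^sub>i\<close> to coincide unless \<open>(x^L)\<^sup>2 - x x^L - 1\<close> has a root in \<open>GF(3^m)\<close>, which
  it has not. Finally, the \<open>2 n\<^sup>2 > 3^(2m)\<close> words of weight at most two cannot lie in distinct
  cosets of the code, which gives a codeword of weight four.\<close>

lemma zero_in_prime_subfield: "0 \<in> prime_subfield"
  unfolding prime_subfield_def by (rule range_eqI[where x = 0]) simp

lemma one_in_prime_subfield: "1 \<in> prime_subfield"
  unfolding prime_subfield_def by (rule range_eqI[where x = 1]) simp

lemma prime_subfield_add:
  "x \<in> prime_subfield \<Longrightarrow> y \<in> prime_subfield \<Longrightarrow> x + y \<in> (prime_subfield :: 'a::field set)"
  unfolding prime_subfield_def by (auto simp flip: of_nat_add)

lemma prime_subfield_mult: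
  "x \<in> prime_subfield \<Longrightarrow> y \<in> prime_subfield \<Longrightarrow> x * y \<in> (prime_subfield :: 'a::field set)"
  unfolding prime_subfield_def by (auto simp flip: of_nat_mult)

lemma CHAR_eq_3_of_card:
  assumes "card (UNIV :: 'a::{field,finite} set) = 3 ^ m"
  shows "CHAR('a) = 3"
proof -
  have "(\<Sum>x\<in>UNIV. x) = (\<Sum>x\<in>UNIV. x + (1::'a))"
    by (rule sum.reindex_bij_witness[of _ "\<lambda>x. x + 1" "\<lambda>x. x - 1"]) auto
  hence "of_nat (3 ^ m) = (0::'a)"
    using assms by (simp add: sum.distrib)
  hence "CHAR('a) dvd 3 ^ m"
    by (simp only: of_nat_eq_0_iff_char_dvd)
  moreover have prime: "prime CHAR('a)"
    by (rule prime_CHAR_semidom) (simp add: finite_imp_CHAR_pos)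
  ultimately have "CHAR('a) dvd 3"
    using prime_dvd_power by blast
  thus ?thesis
    using prime by (intro primes_dvd_imp_eq) simp_all
qed

lemma finite_field_power_card_minus_1:
  fixes x :: "'a::{field,finite}"
  assumes "x \<noteq> 0"
  shows "x ^ (card (UNIV :: 'a set) - 1) = 1"
proof -
  let ?A = "UNIV - {0::'a}"
  have "\<Prod>?A = (\<Prod>y\<in>?A. x * y)"
    by (rule prod.reindex_bij_witness[of _ "\<lambda>y. x * y" "\<lambda>y. y / x"]) (use assms in auto)
  also have "\<dots> = x ^ (card (UNIV :: 'a set) - 1) * \<Prod>?A"
    by (simp add: prod.distrib card_Diff_singleton)
  finally show ?thesis
    by simp
qed

lemma finite_field_power_card: "(x::'a::{field,finite}) ^ card (UNIV :: 'a set) = x"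
proof (cases "x = 0")
  case False
  have "0 < card (UNIV :: 'a set)"
    by (simp add: finite_UNIV_card_ge_0)
  hence "card (UNIV :: 'a set) = Suc (card (UNIV :: 'a set) - 1)"
    by simp
  thus ?thesis
    using finite_field_power_card_minus_1[OF False] by (metis power_Suc2 mult_1_left)
qed (simp add: finite_UNIV_card_ge_0)

context
  assumes CHAR_3: "CHAR('a::field) = 3"
begin

lemma char3_three_eq_0: "(3::'a) = 0"
  using of_nat_CHAR[where 'a = 'a] by (simp add: CHAR_3)

lemma char3_two_eq_minus_1: "(2::'a) = -1"
  using char3_three_eq_0 by (simp add: eq_neg_iff_add_eq_0)

lemma char3_one_neq_minus_1: "(1::'a) \<noteq> -1"
proof
  assume "(1::'a) = -1"
  hence "(2::'a) = 0" by (simp add: eq_neg_iff_add_eq_0)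
  with char3_two_eq_minus_1 show False by simp
qed

lemma char3_of_nat_mod: "(of_nat n :: 'a) = of_nat (n mod 3)"
proof -
  have "(of_nat n :: 'a) = of_nat (3 * (n div 3) + n mod 3)" by simp
  thus ?thesis using char3_three_eq_0 by (simp only: of_nat_add of_nat_mult) simp
qed

lemma char3_prime_subfield: "prime_subfield = {0, 1, -1::'a}"
proof
  show "prime_subfield \<subseteq> {0, 1, -1::'a}"
  proof
    fix x :: 'a assume "x \<in> prime_subfield"
    then obtain n where "x = of_nat (n mod 3)"
      unfolding prime_subfield_def using char3_of_nat_mod by blast
    moreover have "n mod 3 = 0 \<or> n mod 3 = 1 \<or> n mod 3 = 2" by auto
    ultimately show "x \<in> {0, 1, -1}"
      using char3_two_eq_minus_1 by auto
  qed
  have "(-1::'a) = of_nat 2"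
    using char3_two_eq_minus_1 by simp
  hence "(-1::'a) \<in> prime_subfield"
    unfolding prime_subfield_def by (rule range_eqI)
  thus "{0, 1, -1::'a} \<subseteq> prime_subfield"
    using zero_in_prime_subfield one_in_prime_subfield by simp
qed

lemma char3_card_prime_subfield: "card (prime_subfield :: 'a set) = 3"
  using char3_one_neq_minus_1 by (simp add: char3_prime_subfield)

lemma char3_frobenius_add: "((x::'a) + y) ^ (3 ^ j) = x ^ (3 ^ j) + y ^ (3 ^ j)"
  by (rule freshmans_dream') (simp_all add: CHAR_3)

lemma char3_frobenius_diff: "((x::'a) - y) ^ (3 ^ j) = x ^ (3 ^ j) - y ^ (3 ^ j)"
  using char3_frobenius_add[of x "- y" j] by simp

lemma char3_frobenius_sum: "(\<Sum>i\<in>A. f i :: 'a) ^ (3 ^ j) = (\<Sum>i\<in>A. f i ^ (3 ^ j))"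
  by (rule freshmans_dream_sum') (simp_all add: CHAR_3)

lemma char3_frobenius_inj: "(x::'a) ^ (3 ^ j) = y ^ (3 ^ j) \<Longrightarrow> x = y"
  using char3_frobenius_diff[of x y j] by simp

lemma char3_frobenius_prime_subfield: "(g::'a) \<in> prime_subfield \<Longrightarrow> g ^ (3 ^ j) = g"
  by (auto simp: char3_prime_subfield)

lemma char3_frobenius_artin_schreier:
  assumes "(z::'a) ^ 3 = z + 1"
  shows "z ^ (3 ^ k) = z + of_nat k"
proof (induction k)
  case (Suc k)
  have "z ^ (3 ^ Suc k) = (z ^ (3 ^ k)) ^ (3 ^ 1)"
    by (simp add: power_mult[symmetric] mult.commute)
  also have "\<dots> = z ^ 3 + of_nat k ^ 3"
    using char3_frobenius_add[of z "of_nat k" 1] by (simp add: Suc)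
  also have "(of_nat k :: 'a) ^ 3 = of_nat k"
    using char3_frobenius_prime_subfield[of "of_nat k" 1] by (simp add: prime_subfield_def)
  finally show ?case
    using assms by simp
qed simp

lemma char3_frobenius_polynomial:
  assumes "\<And>i. e i \<in> prime_subfield"
  shows "(\<Sum>i\<in>A. e i * x ^ i) ^ (3 ^ j) = (\<Sum>i\<in>A. e i * (x ^ (3 ^ j)) ^ i :: 'a)"
  by (simp add: char3_frobenius_sum power_mult_distrib char3_frobenius_prime_subfield[OF assms]
      flip: power_mult mult.commute)

end

definition prime_words :: "nat \<Rightarrow> (nat \<Rightarrow> 'a::field) set" where
  "prime_words k = {c. (\<forall>i. c i \<in> prime_subfield) \<and> (\<forall>i\<ge>k. c i = 0)}"

lemma card_prime_words:
  "card (prime_words k :: (nat \<Rightarrow> 'a::{field,finite}) set) = card (prime_subfield :: 'a set) ^ k"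
proof -
  let ?W = "prime_words k :: (nat \<Rightarrow> 'a) set"
  let ?P = "PiE {..<k} (\<lambda>_. prime_subfield :: 'a set)"
  have "bij_betw (\<lambda>c. restrict c {..<k}) ?W ?P"
  proof (rule bij_betw_byWitness[where f' = "\<lambda>f i. if i < k then f i else 0"])
    show "\<forall>c\<in>?W. (\<lambda>i. if i < k then restrict c {..<k} i else 0) = c"
      unfolding prime_words_def by (auto simp: fun_eq_iff)
    show "\<forall>f\<in>?P. restrict (\<lambda>i. if i < k then f i else 0) {..<k} = f"
      by (auto simp: fun_eq_iff PiE_def extensional_def)
    show "(\<lambda>c. restrict c {..<k}) ` ?W \<subseteq> ?P"
    proof
      fix f assume "f \<in> (\<lambda>c. restrict c {..<k}) ` ?W"
      then obtain c where c: "c \<in> prime_words k" "f = restrict c {..<k}" by auto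
      have "\<forall>i\<in>{..<k}. c i \<in> prime_subfield" using c(1) unfolding prime_words_def by simp
      thus "f \<in> ?P" unfolding c(2) by (rule restrict_PiE_iff[THEN iffD2])
    qed
    show "(\<lambda>f i. if i < k then f i else 0) ` ?P \<subseteq> ?W"
      unfolding prime_words_def using zero_in_prime_subfield by (auto simp: PiE_def Pi_def)
  qed
  hence "card ?W = card ?P"
    by (rule bij_betw_same_card)
  thus ?thesis by (simp add: card_PiE)
qed

lemma prime_words_add: "c \<in> prime_words k \<Longrightarrow> d \<in> prime_words k \<Longrightarrow> c + d \<in> prime_words k"
  unfolding prime_words_def by (auto intro: prime_subfield_add)

lemma zero_in_prime_words: "0 \<in> prime_words k"
  unfolding prime_words_def using zero_in_prime_subfield by simp

lemma prime_words_mono: "k \<le> k' \<Longrightarrow> prime_words k \<subseteq> prime_words k'"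
  unfolding prime_words_def by auto

lemma finite_prime_words: "finite (prime_words k :: (nat \<Rightarrow> 'a::{field,finite}) set)"
proof (rule card_ge_0_finite)
  have "card (prime_subfield :: 'a set) > 0"
    using zero_in_prime_subfield by (auto simp: card_gt_0_iff)
  thus "card (prime_words k :: (nat \<Rightarrow> 'a) set) > 0"
    by (simp add: card_prime_words)
qed

lemma card_eq_card_image_mult_card_kernel:
  fixes f :: "'a::ab_group_add \<Rightarrow> 'b::ab_group_add"
  assumes "finite A"
    and diff_closed: "\<And>x y. x \<in> A \<Longrightarrow> y \<in> A \<Longrightarrow> x - y \<in> A"
    and f_diff: "\<And>x y. x \<in> A \<Longrightarrow> y \<in> A \<Longrightarrow> f (x - y) = f x - f y"
  shows "card A = card (f ` A) * card {x \<in> A. f x = 0}"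
proof -
  have fibre: "card {x \<in> A. f x = b} = card {x \<in> A. f x = 0}" if b: "b \<in> f ` A" for b
  proof -
    obtain x0 where x0: "x0 \<in> A" "f x0 = b" using b by blast
    have zero: "0 \<in> A" "f 0 = 0"
      using diff_closed[OF x0(1) x0(1)] f_diff[OF x0(1) x0(1)] by simp_all
    have minus: "- x0 \<in> A" "f (- x0) = - b"
      using diff_closed[OF zero(1) x0(1)] f_diff[OF zero(1) x0(1)] zero x0 by simp_all
    have "{x \<in> A. f x = 0} = (\<lambda>x. x - x0) ` {x \<in> A. f x = b}"
    proof (intro equalityI subsetI)
      fix k assume k: "k \<in> {x \<in> A. f x = 0}"
      have "k + x0 \<in> A" "f (k + x0) = b"
        using diff_closed[of k "- x0"] f_diff[of k "- x0"] k minus by simp_all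
      thus "k \<in> (\<lambda>x. x - x0) ` {x \<in> A. f x = b}"
        by (intro image_eqI[of _ _ "k + x0"]) simp_all
    qed (use diff_closed f_diff x0 in auto)
    moreover have "inj_on (\<lambda>x. x - x0) {x \<in> A. f x = b}"
      by (rule inj_onI) simp
    ultimately show ?thesis
      by (simp add: card_image)
  qed
  have "card A = card (\<Union>b\<in>f ` A. {x \<in> A. f x = b})"
    by (rule arg_cong[where f = card]) auto
  also have "\<dots> = (\<Sum>b\<in>f ` A. card {x \<in> A. f x = b})"
    by (rule card_UN_disjoint) (use \<open>finite A\<close> in auto)
  also have "\<dots> = card (f ` A) * card {x \<in> A. f x = 0}"
    using fibre by simp
  finally show ?thesis .
qed

lemma sum_collision_of_card_lt:
  fixes C E :: "'a::ab_group_add set"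
  assumes "finite W" and sum_in: "\<And>c e. c \<in> C \<Longrightarrow> e \<in> E \<Longrightarrow> c + e \<in> W"
    and "card W < card C * card E"
  shows "\<exists>c\<in>C. \<exists>c'\<in>C. \<exists>e\<in>E. \<exists>e'\<in>E. e \<noteq> e' \<and> c - c' = e' - e"
proof -
  have "\<not> inj_on (\<lambda>(c, e). c + e) (C \<times> E)"
  proof
    assume "inj_on (\<lambda>(c, e). c + e) (C \<times> E)"
    hence "card (C \<times> E) \<le> card W"
      by (rule card_inj_on_le) (use assms in auto)
    thus False using assms(3) by (simp add: card_cartesian_product)
  qed
  then obtain c e c' e' where "c \<in> C" "e \<in> E" "c' \<in> C" "e' \<in> E" "(c, e) \<noteq> (c', e')"
    and eq: "c + e = c' + e'"
    unfolding inj_on_def by auto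
  moreover have "c - c' = e' - e" using eq by (simp add: algebra_simps)
  moreover have "e \<noteq> e'" using eq \<open>(c, e) \<noteq> (c', e')\<close> by auto
  ultimately show ?thesis by blast
qed

lemma hamming_dist_eq_hamming_dist_diff:
  "hamming_dist n c d = hamming_dist n (c - d) (0 :: nat \<Rightarrow> 'b::ab_group_add)"
  unfolding hamming_dist_def by simp

lemma hamming_dist_le: "hamming_dist n c d \<le> n"
  unfolding hamming_dist_def using card_mono[of "{..<n}" "{i. i < n \<and> c i \<noteq> d i}"] by auto

lemma min_dist_eqI:
  fixes C :: "(nat \<Rightarrow> 'b::ab_group_add) set"
  assumes diff: "\<And>c d. c \<in> C \<Longrightarrow> d \<in> C \<Longrightarrow> c - d \<in> C"
    and lower: "\<And>c. c \<in> C \<Longrightarrow> c \<noteq> 0 \<Longrightarrow> w \<le> hamming_dist n c 0"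
    and witness: "c \<in> C" "c \<noteq> 0" "hamming_dist n c 0 \<le> w"
  shows "min_dist n C = w"
proof -
  let ?M = "{hamming_dist n c d | c d. c \<in> C \<and> d \<in> C \<and> c \<noteq> d}"
  have "0 \<in> C" using diff[OF witness(1) witness(1)] by simp
  hence "hamming_dist n c 0 \<in> ?M" using witness by blast
  moreover have "hamming_dist n c 0 = w" using lower[OF witness(1,2)] witness(3) by simp
  moreover have "w \<le> x" if x_in: "x \<in> ?M" for x
  proof -
    obtain c' d' where cd: "c' \<in> C" "d' \<in> C" "c' \<noteq> d'" and x: "x = hamming_dist n c' d'"
      using x_in by blast
    have "w \<le> hamming_dist n (c' - d') 0"
      using cd by (intro lower diff) simp_all
    thus ?thesis unfolding x hamming_dist_eq_hamming_dist_diff[of n c' d'] .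
  qed
  moreover have "finite ?M"
    by (rule finite_subset[of _ "{..n}"]) (auto simp: hamming_dist_le)
  ultimately show ?thesis
    unfolding min_dist_def by (intro Min_eqI) auto
qed

locale primitive_element =
  fixes p :: "'a::{field,finite}" and n :: nat
  assumes card_UNIV: "card (UNIV :: 'a set) = n + 1"
    and primitive: "is_primitive p"
begin

lemma nonzero: "p \<noteq> 0"
  using primitive unfolding is_primitive_def by simp

lemma n_pos: "0 < n"
proof -
  have "{0, 1::'a} \<subseteq> UNIV" by simp
  hence "card {0, 1::'a} \<le> card (UNIV :: 'a set)" by (intro card_mono) simp_all
  thus ?thesis using card_UNIV by simp
qed

lemma power_n: "p ^ n = 1"
  using finite_field_power_card_minus_1[OF nonzero] by (simp add: card_UNIV)

lemma power_mod: "p ^ (j mod n) = p ^ j"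
proof -
  have "p ^ j = p ^ (n * (j div n) + j mod n)" by simp
  also have "\<dots> = p ^ (j mod n)" by (simp only: power_add power_mult power_n) simp
  finally show ?thesis ..
qed

lemma power_neq_1: assumes "0 < j" "j < n" shows "p ^ j \<noteq> 1"
proof
  assume pj: "p ^ j = 1"
  have "UNIV - {0} \<subseteq> (\<lambda>i. p ^ i) ` {..<j}"
  proof
    fix x assume "x \<in> UNIV - {0::'a}"
    then obtain i where "x = p ^ i" using primitive unfolding is_primitive_def by auto
    also have "p ^ i = p ^ (j * (i div j) + i mod j)" by simp
    also have "\<dots> = p ^ (i mod j)" by (simp only: power_add power_mult pj) simp
    finally show "x \<in> (\<lambda>i. p ^ i) ` {..<j}" using assms by auto
  qed
  hence "card (UNIV - {0::'a}) \<le> card ((\<lambda>i. p ^ i) ` {..<j})" by (intro card_mono) auto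
  also have "\<dots> \<le> j" using card_image_le[of "{..<j}" "\<lambda>i. p ^ i"] by simp
  finally show False using assms card_UNIV by (simp add: card_Diff_singleton)
qed

lemma power_eq_1_iff: "p ^ j = 1 \<longleftrightarrow> n dvd j"
proof
  assume "p ^ j = 1"
  hence "p ^ (j mod n) = 1" using power_mod[of j] by simp
  hence "j mod n = 0" using power_neq_1[of "j mod n"] n_pos by fastforce
  thus "n dvd j" by auto
qed (auto simp: power_mult power_n)

lemma power_eq_power_iff: "p ^ i = p ^ j \<longleftrightarrow> i mod n = j mod n"
proof (induction i j rule: linorder_wlog)
  case (le i j)
  have "p ^ j = p ^ i * p ^ (j - i)"
    using le by (simp flip: power_add)
  hence "p ^ i = p ^ j \<longleftrightarrow> p ^ (j - i) = 1"
    using nonzero by (metis mult_cancel_left1 power_not_zero)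
  thus ?case
    using mod_eq_dvd_iff_nat[OF le, of n] by (auto simp: power_eq_1_iff)
qed (simp add: eq_commute)

lemma power_inj_on: "inj_on ((^) p) {..<n}"
  by (rule inj_onI) (simp add: power_eq_power_iff)

end

locale gf3_odd_degree = primitive_element p n for p :: "'a::{field,finite}" and n +
  fixes m l :: nat
  assumes l_pos: "1 \<le> l" and m_eq: "m = 2 * l + 1" and n_plus_1: "n + 1 = 3 ^ m"
begin

abbreviation L :: nat where "L \<equiv> 3 ^ l"
abbreviation K :: nat where "K \<equiv> n div 2"
abbreviation U :: nat where "U \<equiv> K + 1"
abbreviation V :: nat where "V \<equiv> 2 * L + 1"

lemma card_eq: "card (UNIV :: 'a set) = 3 ^ m"
  using card_UNIV n_plus_1 by simp

lemma CHAR_eq_3: "CHAR('a) = 3"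
  using card_eq by (rule CHAR_eq_3_of_card)

lemmas three_eq_0 = char3_three_eq_0[OF CHAR_eq_3]
  and two_eq_minus_1 = char3_two_eq_minus_1[OF CHAR_eq_3]
  and one_neq_minus_1 = char3_one_neq_minus_1[OF CHAR_eq_3]
  and of_nat_mod_3 = char3_of_nat_mod[OF CHAR_eq_3]
  and prime_subfield_eq = char3_prime_subfield[OF CHAR_eq_3]
  and card_prime_subfield = char3_card_prime_subfield[OF CHAR_eq_3]
  and frobenius_add = char3_frobenius_add[OF CHAR_eq_3]
  and frobenius_diff = char3_frobenius_diff[OF CHAR_eq_3]
  and frobenius_inj = char3_frobenius_inj[OF CHAR_eq_3]
  and frobenius_artin_schreier = char3_frobenius_artin_schreier[OF CHAR_eq_3]
  and frobenius_polynomial = char3_frobenius_polynomial[OF CHAR_eq_3]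

lemma L_ge_3: "3 \<le> L"
  using power_increasing[OF l_pos, of "3::nat"] by simp

lemma three_power_m_eq: "(3::nat) ^ m = 3 * (L * L)"
  by (simp add: m_eq power_add power_mult_distrib mult_2 flip: power_add)

lemma n_eq: "n = 3 * (L * L) - 1"
  using three_power_m_eq n_plus_1 by simp

lemma two_K: "2 * K = n" and odd_K: "odd K"
proof -
  have "odd L" by simp
  then obtain t where "L = 2 * t + 1" by (rule oddE)
  hence "n = 2 * (6 * t * t + 6 * t + 1)"
    using n_eq by (simp add: algebra_simps)
  thus "2 * K = n" "odd K" by simp_all
qed

lemma l_less_L: "l < L"
proof -
  have "l < 2 ^ l" by (rule less_exp)
  also have "(2::nat) ^ l \<le> 3 ^ l" by (rule power_mono) auto
  finally show ?thesis .
qed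

lemma Suc_two_m_le_n: "2 * m + 1 \<le> n"
proof -
  have "3 * L \<le> L * L" using L_ge_3 by simp
  thus ?thesis using n_eq m_eq l_less_L L_ge_3 by linarith
qed

lemma power_3_m: "(x::'a) ^ (3 ^ m) = x"
  using finite_field_power_card[of x] by (simp add: card_eq)

lemma frobenius_mod_m: "(x::'a) ^ (3 ^ j) = x ^ (3 ^ (j mod m))"
proof -
  have periodic: "(y::'a) ^ (3 ^ (m * c)) = y" for y c
  proof (induction c)
    case (Suc c)
    have "y ^ (3 ^ (m * Suc c)) = (y ^ (3 ^ (m * c))) ^ (3 ^ m)"
      by (simp add: power_add power_mult[symmetric] mult.commute)
    thus ?case using Suc power_3_m by simp
  qed simp
  have "x ^ (3 ^ j) = (x ^ (3 ^ (m * (j div m)))) ^ (3 ^ (j mod m))"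
    by (metis div_mult_mod_eq power_add power_mult mult.commute)
  thus ?thesis using periodic by simp
qed

lemma power_L_L_3: "(((x::'a) ^ L) ^ L) ^ 3 = x"
proof -
  have "(3::nat) ^ l * 3 ^ l * 3 = 3 ^ m"
    using m_eq by (simp add: power_add[symmetric] mult_2)
  thus ?thesis using power_3_m by (simp only: power_mult[symmetric])
qed

lemma power_K_cases: "(x::'a) \<noteq> 0 \<Longrightarrow> x ^ K = 1 \<or> x ^ K = -1"
proof -
  assume "x \<noteq> 0"
  have "(x ^ K) ^ 2 = x ^ (2 * K)"
    by (simp add: power_mult[symmetric] mult.commute)
  also have "\<dots> = 1"
    using finite_field_power_card_minus_1[OF \<open>x \<noteq> 0\<close>] by (simp add: two_K card_UNIV)
  finally show ?thesis
    by (simp add: power2_eq_1_iff)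
qed

lemma power_K: "p ^ K = -1"
proof -
  have "0 < K" "K < n"
    using two_K Suc_two_m_le_n by linarith+
  hence "p ^ K \<noteq> 1"
    by (rule power_neq_1)
  thus ?thesis
    using power_K_cases[OF nonzero] by simp
qed

lemma power_U: "p ^ U = - p"
  using power_K by simp

text \<open>The exponent \<open>V' = 3 (2 L - 1)\<close> inverts \<open>V\<close> modulo \<open>n\<close>: \<open>V V' = 4 n + 1\<close>.\<close>
abbreviation V' :: nat where "V' \<equiv> 3 * (2 * L - 1)"

lemma V_mult_V': "V * V' = 4 * n + 1"
proof -
  obtain t where t: "L = t + 1" using L_ge_3 by (metis le_add_diff_inverse2 le_trans one_le_numeral)
  hence "n = 3 * (t * t) + 6 * t + 2" using n_eq by (simp add: algebra_simps)
  moreover have "2 * L - 1 = 2 * t + 1" using t by simp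
  ultimately show ?thesis using t by (simp add: algebra_simps)
qed

lemma power_V_V': "((x::'a) ^ V) ^ V' = x"
proof (cases "x = 0")
  case False
  have "x ^ n = 1"
    using finite_field_power_card_minus_1[OF False] by (simp add: card_UNIV)
  hence "x ^ (4 * n + 1) = x"
    by (simp only: power_add mult.commute[of 4] power_mult) simp
  thus ?thesis
    by (simp only: V_mult_V' flip: power_mult)
qed (use L_ge_3 in simp)

lemma power_V_inj: "(x::'a) ^ V = y ^ V \<Longrightarrow> x = y"
  by (metis power_V_V')

lemma power_V_neq_minus_conjugate: "p ^ V \<noteq> - (p ^ (3 ^ i))"
proof
  assume h: "p ^ V = - (p ^ (3 ^ i))"
  define j where "j = i mod m"
  have "p ^ (3 ^ i) = p ^ (3 ^ j)" unfolding j_def by (rule frobenius_mod_m)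
  hence "p ^ V = p ^ (K + 3 ^ j)"
    using h power_K by (simp add: power_add)
  hence "V mod n = (K + 3 ^ j) mod n"
    by (simp only: power_eq_power_iff)
  moreover have "(3::nat) ^ j \<le> L * L"
  proof -
    have "j \<le> 2 * l" using m_eq unfolding j_def by simp
    hence "(3::nat) ^ j \<le> 3 ^ (2 * l)" by (intro power_increasing) auto
    thus ?thesis by (simp add: power_mult power2_eq_square[symmetric] mult.commute)
  qed
  moreover have "(1::nat) \<le> 3 ^ j" by simp
  moreover have "3 * L \<le> L * L" using L_ge_3 by simp
  ultimately show False
    using two_K n_eq L_ge_3 mod_less[of V n] mod_less[of "K + 3 ^ j" n] by linarith
qed

lemma conjugate_GF3_sym: "conjugate_GF3 x y \<Longrightarrow> conjugate_GF3 y (x::'a)"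
proof -
  assume "conjugate_GF3 x y"
  then obtain j where "y = x ^ (3 ^ j)" unfolding conjugate_GF3_def by blast
  hence "y = x ^ (3 ^ (j mod m))" by (simp only: frobenius_mod_m[of x j])
  moreover have "j mod m \<le> m" using m_eq by simp
  ultimately have "y ^ (3 ^ (m - j mod m)) = x ^ (3 ^ m)"
    by (simp flip: power_mult power_add)
  thus ?thesis unfolding conjugate_GF3_def power_3_m by metis
qed

lemma not_conjugate_U_V: "\<not> conjugate_GF3 (p ^ U) (p ^ V)"
proof
  assume "conjugate_GF3 (p ^ U) (p ^ V)"
  then obtain j where "p ^ V = (- p) ^ (3 ^ j)"
    unfolding conjugate_GF3_def power_U by blast
  also have "(- p) ^ (3 ^ j) = - (p ^ (3 ^ j))" by simp
  finally show False using power_V_neq_minus_conjugate by blast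
qed

lemma conjugates_V_neq_U: "(p ^ V) ^ (3 ^ j) \<noteq> p ^ U"
  using conjugate_GF3_sym not_conjugate_U_V unfolding conjugate_GF3_def by metis

lemma inj_on_conjugates_V: "inj_on (\<lambda>j. (p ^ V) ^ (3 ^ j)) {..<m}"
proof (rule inj_onI)
  have small: "(3::nat) ^ i < n" if "i < m" for i
  proof -
    have "3 * 3 ^ i \<le> (3::nat) ^ m"
      using power_increasing[of "Suc i" m "3::nat"] that by simp
    moreover have "(1::nat) \<le> 3 ^ i" by simp
    ultimately show ?thesis using n_plus_1 by linarith
  qed
  fix i j assume "i \<in> {..<m}" "j \<in> {..<m}" "(p ^ V) ^ (3 ^ i) = (p ^ V) ^ (3 ^ j)"
  hence "(p ^ (3 ^ i)) ^ V = (p ^ (3 ^ j)) ^ V"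
    by (simp only: power_mult[symmetric] mult.commute)
  hence "p ^ (3 ^ i) = p ^ (3 ^ j)" by (rule power_V_inj)
  hence "(3::nat) ^ i = 3 ^ j"
    using power_inj_on small \<open>i \<in> {..<m}\<close> \<open>j \<in> {..<m}\<close> by (auto dest: inj_onD)
  thus "i = j" by simp
qed

lemma artin_schreier_root_l_mod_3:
  assumes "(z::'a) ^ 3 = z + 1"
  shows "l mod 3 = 1"
proof -
  have "z + of_nat m = z"
    using frobenius_artin_schreier[OF assms, of m] power_3_m by simp
  hence "3 dvd m"
    using of_nat_eq_0_iff_char_dvd[where 'a = 'a, of m] CHAR_eq_3 by simp
  thus ?thesis using m_eq by presburger
qed

lemma frobenius_l_artin_schreier_root:
  assumes "(z::'a) ^ 3 = z + 1"
  shows "z ^ L = z ^ 3"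
proof -
  have "z ^ L = z + of_nat l" by (rule frobenius_artin_schreier[OF assms])
  also have "(of_nat l :: 'a) = of_nat (l mod 3)" by (rule of_nat_mod_3)
  finally show ?thesis
    using assms artin_schreier_root_l_mod_3[OF assms] by simp
qed

lemma frobenius_l_sextic_root:
  assumes y: "(y::'a) ^ 6 + y ^ 4 = 1"
  shows "y ^ L = y ^ 3"
proof -
  have y_nz: "y \<noteq> 0" using y by auto
  define z where "z = 1 / y ^ 2"
  have z: "z ^ 3 = z + 1"
  proof -
    have "y ^ 6 * (z ^ 3 - z - 1) = 1 - (y ^ 6 + y ^ 4)"
      unfolding z_def using y_nz by (simp add: field_simps)
    hence "z ^ 3 - z - 1 = 0" using y y_nz by simp
    thus ?thesis by (simp add: algebra_simps)
  qed
  have "1 / (y ^ L) ^ 2 = 1 / (y ^ 3) ^ 2"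
    using frobenius_l_artin_schreier_root[OF z]
    unfolding z_def by (simp add: power_one_over power_mult[symmetric] mult.commute)
  hence "(y ^ L) ^ 2 = (y ^ 3) ^ 2" by simp
  hence "y ^ L = y ^ 3 \<or> y ^ L = - (y ^ 3)" by (rule power2_eq_iff[THEN iffD1])
  thus ?thesis
  proof
    assume minus: "y ^ L = - (y ^ 3)"
    have "(y ^ L) ^ L = - ((y ^ 3) ^ L)" by (simp add: minus)
    also have "(y ^ 3) ^ L = (y ^ L) ^ 3" by (simp flip: power_mult add: mult.commute)
    also have "\<dots> = - (y ^ 9)" by (simp add: minus flip: power_mult)
    finally have y27: "y ^ 27 = y"
      using power_L_L_3[of y] by (simp flip: power_mult)
    have y27k: "y ^ (3 ^ (3 * k)) = y" for k
    proof (induction k)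
      case (Suc k)
      have "y ^ (3 ^ (3 * Suc k)) = (y ^ (3 ^ (3 * k))) ^ 27"
        by (simp add: power_mult[symmetric] power_add mult.commute)
      thus ?case using Suc y27 by simp
    qed simp
    have "l = 3 * (l div 3) + 1"
      using artin_schreier_root_l_mod_3[OF z] by presburger
    hence "y ^ L = (y ^ (3 ^ (3 * (l div 3)))) ^ 3"
      by (metis power_mult power_Suc2 add.commute plus_1_eq_Suc)
    thus ?thesis using y27k by simp
  qed
qed

lemma frobenius_l_quadratic_nonzero: "((x::'a) ^ L) ^ 2 - x * x ^ L - 1 \<noteq> 0"
proof
  define r where "r = x ^ L"
  define s where "s = r ^ L"
  assume "(x ^ L) ^ 2 - x * x ^ L - 1 = 0"
  hence r: "r ^ 2 - x * r - 1 = 0" unfolding r_def .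
  have s: "s ^ 2 - r * s - 1 = 0"
  proof -
    have "(r ^ 2 - x * r - 1) ^ L = s ^ 2 - r * s - 1"
      unfolding s_def r_def
      by (simp add: frobenius_diff power_mult_distrib power_mult[symmetric] mult_ac)
    thus ?thesis using r L_ge_3 by (simp add: power_0_left)
  qed
  have x: "x = s ^ 3" using power_L_L_3[of x] unfolding r_def s_def by simp
  text \<open>Eliminating \<open>r\<close> from the two quadratics (using \<open>3 = 0\<close>) leaves a sextic in \<open>s\<close>.\<close>
  have "s ^ 6 + s ^ 4 - 1 = - (s ^ 2 * (r ^ 2 - s ^ 3 * r - 1))
      - (s ^ 2 - r * s - 1) * (r * s + s ^ 2 - 1 - s ^ 4) + 3 * (s ^ 4 - s ^ 2)"
    by algebra
  hence sextic: "s ^ 6 + s ^ 4 = 1"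
    using r s x three_eq_0 by simp
  have "r = (s ^ L) ^ 3" using power_L_L_3[of r] unfolding s_def by simp
  hence "r = s ^ 9" using frobenius_l_sextic_root[OF sextic] by (simp flip: power_mult)
  moreover have "s ^ 10 = s ^ 9 * s" by (simp flip: power_Suc2)
  ultimately have "s ^ 2 - s ^ 10 - 1 = 0" using s by (simp add: mult.commute)
  moreover have "s ^ 2 - 1 = 2 * ((s ^ 2 - s ^ 10 - 1) + (s ^ 6 + s ^ 4 - 1) * (s ^ 4 - s ^ 2 + 1))
      - 3 * (s ^ 2 - 1)"
    by algebra
  ultimately have "s ^ 2 = 1" using sextic three_eq_0 by simp
  hence "s ^ 6 + s ^ 4 = 1 + 1"
    by (metis power_mult power_one numeral_Bit0 mult_2)
  thus False using sextic two_eq_minus_1 one_neq_minus_1 by simp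
qed

lemma power_V: "(x::'a) ^ V = x * (x ^ L) ^ 2"
  by (simp add: power_add power_mult[symmetric] mult.commute)

lemma power_V_uminus: "(- (x::'a)) ^ V = - (x ^ V)"
  by (rule power_minus_odd) simp

lemma power_V_sum_uminus_eq_0:
  assumes "a \<noteq> 0" "b \<noteq> 0"
    and sum: "a ^ V + b ^ V + (- (a + b)) ^ V = (0::'a)"
  shows "b = a \<or> b = - a"
proof -
  define A where "A = a ^ L"
  define B where "B = b ^ L"
  have "(- (a + b)) ^ L = - ((a + b) ^ L)"
    by (rule power_minus_odd) simp
  hence "(- (a + b)) ^ L = - (A + B)"
    unfolding A_def B_def by (simp only: frobenius_add)
  hence E: "a * A ^ 2 + b * B ^ 2 + (- (a + b)) * (- (A + B)) ^ 2 = 0"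
    using sum unfolding power_V A_def[symmetric] B_def[symmetric] by simp
  have "(B - A) * (a * B - b * A)
      = - (a * A ^ 2 + b * B ^ 2 + (- (a + b)) * (- (A + B)) ^ 2) - 3 * (A * B * (a + b))"
    by algebra
  hence "(B - A) * (a * B - b * A) = 0"
    by (simp only: E three_eq_0) simp
  hence "B = A \<or> a * B = b * A" by simp
  thus ?thesis
  proof
    assume "B = A"
    thus ?thesis unfolding A_def B_def using frobenius_inj by blast
  next
    assume h: "a * B = b * A"
    define t where "t = b / a"
    have "t ^ L = B / A"
      unfolding t_def A_def B_def by (simp add: power_divide)
    also have "\<dots> = t"
      unfolding t_def A_def using h \<open>a \<noteq> 0\<close> by (simp add: field_simps A_def)
    finally have "t ^ 3 = t"
      using power_L_L_3[of t] by simp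
    moreover have "t * (t - 1) * (t + 1) = t ^ 3 - t" by algebra
    ultimately have "t * (t - 1) * (t + 1) = 0" by simp
    moreover have "t \<noteq> 0" unfolding t_def using assms by simp
    ultimately have "t = 1 \<or> t = -1" by (simp add: eq_neg_iff_add_eq_0)
    moreover have "b = a * t" unfolding t_def using \<open>a \<noteq> 0\<close> by simp
    ultimately show ?thesis by auto
  qed
qed

lemma power_V_sum_eq_0:
  assumes "a \<noteq> 0"
    and sum: "a ^ V + b ^ V + (a + b) ^ V = (0::'a)"
  shows "b = - a"
proof (rule ccontr)
  assume "b \<noteq> - a"
  hence ab: "a + b \<noteq> 0" by (metis add.commute add_eq_0_iff2)
  define A where "A = a ^ L"
  define B where "B = b ^ L"
  have AB: "(a + b) ^ L = A + B"
    unfolding A_def B_def by (simp add: frobenius_add)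
  hence E: "a * A ^ 2 + b * B ^ 2 + (a + b) * (A + B) ^ 2 = 0"
    using sum unfolding power_V A_def[symmetric] B_def[symmetric] by simp
  have AB_nz: "A + B \<noteq> 0" using ab AB by (metis power_not_zero)
  text \<open>The quotient \<open>x = (a - b) / (a + b)\<close> would be a root of \<open>(x^L)^2 - x x^L - 1\<close>.\<close>
  define x where "x = (a - b) / (a + b)"
  have xL: "x ^ L = (A - B) / (A + B)"
    unfolding x_def A_def B_def by (simp add: power_divide frobenius_diff frobenius_add)
  have "(A - B) ^ 2 * (a + b) - (a - b) * (A - B) * (A + B) - (A + B) ^ 2 * (a + b)
      = (a * A ^ 2 + b * B ^ 2 + (a + b) * (A + B) ^ 2)
        - 3 * (2 * A * B * (a + b) + a * A ^ 2 + b * B ^ 2)"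
    by algebra
  hence numerator: "(A - B) ^ 2 * (a + b) - (a - b) * (A - B) * (A + B) - (A + B) ^ 2 * (a + b) = 0"
    by (simp only: E three_eq_0) simp
  have quotient: "(c / D) ^ 2 - e / d * (c / D) - 1 = (c ^ 2 * d - e * c * D - D ^ 2 * d) / (D ^ 2 * d)"
    if "d \<noteq> 0" "D \<noteq> 0" for c D e d :: 'a
    using that by (simp add: field_simps power2_eq_square)
  have "(x ^ L) ^ 2 - x * x ^ L - 1
      = ((A - B) ^ 2 * (a + b) - (a - b) * (A - B) * (A + B) - (A + B) ^ 2 * (a + b))
        / ((A + B) ^ 2 * (a + b))"
    unfolding xL unfolding x_def by (rule quotient[OF ab AB_nz])
  thus False using frobenius_l_quadratic_nonzero numerator by simp
qed

lemma power_V_sign: "(s::'a) \<in> {1, -1} \<Longrightarrow> s ^ V = s"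
  using power_V_uminus[of 1] by auto

text \<open>With \<open>z = \<alpha> a^U\<close>, the sign \<open>a^K = \<plusminus>1\<close> (the quadratic character of \<open>a\<close>) moves from
  \<open>a^V\<close> to \<open>z^V\<close>; this turns a signed relation between the \<open>a^U\<close> and the \<open>a^V\<close> into
  one between the \<open>z\<close> and the \<open>z^V\<close>.\<close>
lemma twist_power_V:
  assumes "a \<noteq> 0" "\<alpha> \<in> {1, -1::'a}"
  shows "a ^ K * (\<alpha> * a ^ U) ^ V = \<alpha> * a ^ V"
proof -
  define e where "e = a ^ K"
  have e: "e \<in> {1, -1}" unfolding e_def using power_K_cases[OF assms(1)] by simp
  have "(\<alpha> * a ^ U) ^ V = \<alpha> ^ V * a ^ V * e ^ V"
    unfolding e_def by (simp add: power_mult_distrib mult_ac)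
  also have "\<dots> = \<alpha> * a ^ V * e"
    by (simp only: power_V_sign[OF e] power_V_sign[OF assms(2)])
  finally have "e * (\<alpha> * a ^ U) ^ V = \<alpha> * a ^ V * (e * e)"
    by (simp only: mult_ac)
  also have "e * e = 1" using e by auto
  finally show ?thesis unfolding e_def by simp
qed

lemma twist_eq_imp_eq:
  assumes "a \<noteq> 0" "b \<noteq> 0" "\<alpha> \<in> {1, -1::'a}" "\<beta> \<in> {1, -1::'a}"
    and K: "a ^ K = b ^ K"
    and U: "\<alpha> * a ^ U = \<beta> * b ^ U \<or> \<alpha> * a ^ U = - (\<beta> * b ^ U)"
  shows "a = b"
proof -
  define e where "e = a ^ K"
  have e: "e \<noteq> 0" unfolding e_def using assms(1) by simp
  have "\<alpha> * a * e = \<beta> * b * e \<or> \<alpha> * a * e = - (\<beta> * b) * e"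
    using U K unfolding e_def by (simp add: algebra_simps)
  hence "\<alpha> * a = \<beta> * b \<or> \<alpha> * a = - (\<beta> * b)"
    using e by (simp only: mult_cancel_right simp_thms)
  hence "a = b \<or> a = - b"
    using assms(3,4) by (auto simp: minus_equation_iff)
  moreover have "a \<noteq> - b"
  proof
    assume "a = - b"
    hence "a ^ K = - (b ^ K)" using odd_K by simp
    hence "b ^ K + b ^ K = 0" unfolding K by (simp only: eq_neg_iff_add_eq_0)
    hence "2 * b ^ K = 0" by (simp only: mult_2)
    thus False using assms(2) two_eq_minus_1 by simp
  qed
  ultimately show ?thesis by simp
qed

lemma signed_power_V_sum_3:
  assumes nz: "z1 \<noteq> 0" "z2 \<noteq> 0" "z3 \<noteq> (0::'a)"
    and sum: "z1 + z2 + z3 = 0"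
    and e: "e1 \<in> {1, -1}" "e2 \<in> {1, -1}" "e3 \<in> {1, -1::'a}"
    and E: "e1 * z1 ^ V + e2 * z2 ^ V + e3 * z3 ^ V = 0"
  shows "(e1 = e2 \<and> (z2 = z1 \<or> z2 = - z1)) \<or> (e1 = e3 \<and> (z3 = z1 \<or> z3 = - z1))
       \<or> (e2 = e3 \<and> (z3 = z2 \<or> z3 = - z2))"
proof -
  have "z3 = - (z1 + z2) + (z1 + z2 + z3)" "z2 = - (z1 + z3) + (z1 + z2 + z3)"
    "z1 = - (z2 + z3) + (z1 + z2 + z3)" by algebra+
  hence z3: "z3 = - (z1 + z2)" and z2: "z2 = - (z1 + z3)" and z1: "z1 = - (z2 + z3)"
    using sum by simp_all
  have "(e1 = e2 \<and> e2 = e3) \<or> (e1 = e2 \<and> e3 = - e1) \<or> (e1 = e3 \<and> e2 = - e1)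
      \<or> (e2 = e3 \<and> e1 = - e2)"
    using e by auto
  thus ?thesis
  proof (elim disjE conjE)
    assume h: "e1 = e2" "e2 = e3"
    hence "e1 * (z1 ^ V + z2 ^ V + (- (z1 + z2)) ^ V) = 0"
      using E z3 by (simp add: algebra_simps)
    hence "z1 ^ V + z2 ^ V + (- (z1 + z2)) ^ V = 0" using e(1) by auto
    thus ?thesis using h power_V_sum_uminus_eq_0[OF nz(1,2)] by simp
  next
    assume h: "e1 = e2" "e3 = - e1"
    hence "e1 * (z1 ^ V + z2 ^ V + (z1 + z2) ^ V) = 0"
      using E z3 power_V_uminus[of "z1 + z2"] by (simp add: algebra_simps)
    hence "z1 ^ V + z2 ^ V + (z1 + z2) ^ V = 0" using e(1) by auto
    thus ?thesis using h power_V_sum_eq_0[OF nz(1)] by simp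
  next
    assume h: "e1 = e3" "e2 = - e1"
    hence "e1 * (z1 ^ V + z3 ^ V + (z1 + z3) ^ V) = 0"
      using E z2 power_V_uminus[of "z1 + z3"] by (simp add: algebra_simps)
    hence "z1 ^ V + z3 ^ V + (z1 + z3) ^ V = 0" using e(1) by auto
    thus ?thesis using h power_V_sum_eq_0[OF nz(1)] by simp
  next
    assume h: "e2 = e3" "e1 = - e2"
    hence "e2 * (z2 ^ V + z3 ^ V + (z2 + z3) ^ V) = 0"
      using E z1 power_V_uminus[of "z2 + z3"] by (simp add: algebra_simps)
    hence "z2 ^ V + z3 ^ V + (z2 + z3) ^ V = 0" using e(2) by auto
    thus ?thesis using h power_V_sum_eq_0[OF nz(2)] by simp
  qed
qed

lemma no_signed_relation_2:
  assumes "a \<noteq> 0" "b \<noteq> 0" "a \<noteq> b" "\<alpha> \<in> {1, -1::'a}" "\<beta> \<in> {1, -1::'a}"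
    and U: "\<alpha> * a ^ U + \<beta> * b ^ U = 0"
    and V: "\<alpha> * a ^ V + \<beta> * b ^ V = 0"
  shows False
proof -
  define z1 where "z1 = \<alpha> * a ^ U"
  define z2 where "z2 = \<beta> * b ^ U"
  have z2: "z2 = - z1"
    using U unfolding z1_def z2_def by (simp add: eq_neg_iff_add_eq_0 add.commute)
  have z1_nz: "z1 \<noteq> 0" unfolding z1_def using assms(1,4) by auto
  have "a ^ K * z1 ^ V + b ^ K * z2 ^ V = 0"
    unfolding z1_def z2_def twist_power_V[OF assms(1,4)] twist_power_V[OF assms(2,5)] by (rule V)
  hence "(a ^ K - b ^ K) * z1 ^ V = 0"
    unfolding z2 power_V_uminus by (simp add: algebra_simps)
  hence "a ^ K = b ^ K" using z1_nz by simp
  moreover have "\<alpha> * a ^ U = - (\<beta> * b ^ U)" using z2 unfolding z1_def z2_def by simp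
  ultimately show False using twist_eq_imp_eq[OF assms(1,2,4,5)] assms(3) by blast
qed

lemma no_signed_relation_3:
  assumes nz: "a \<noteq> 0" "b \<noteq> 0" "c \<noteq> 0" and d: "a \<noteq> b" "a \<noteq> c" "b \<noteq> c"
    and s: "\<alpha> \<in> {1, -1::'a}" "\<beta> \<in> {1, -1::'a}" "\<gamma> \<in> {1, -1::'a}"
    and U: "\<alpha> * a ^ U + \<beta> * b ^ U + \<gamma> * c ^ U = 0"
    and V: "\<alpha> * a ^ V + \<beta> * b ^ V + \<gamma> * c ^ V = 0"
  shows False
proof -
  define z1 where "z1 = \<alpha> * a ^ U"
  define z2 where "z2 = \<beta> * b ^ U"
  define z3 where "z3 = \<gamma> * c ^ U"
  have E: "a ^ K * z1 ^ V + b ^ K * z2 ^ V + c ^ K * z3 ^ V = 0"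
    unfolding z1_def z2_def z3_def
      twist_power_V[OF nz(1) s(1)] twist_power_V[OF nz(2) s(2)] twist_power_V[OF nz(3) s(3)]
    by (rule V)
  have "(a ^ K = b ^ K \<and> (z2 = z1 \<or> z2 = - z1)) \<or> (a ^ K = c ^ K \<and> (z3 = z1 \<or> z3 = - z1))
       \<or> (b ^ K = c ^ K \<and> (z3 = z2 \<or> z3 = - z2))"
  proof (rule signed_power_V_sum_3[OF _ _ _ _ _ _ _ E])
    show "a ^ K \<in> {1, -1}" "b ^ K \<in> {1, -1}" "c ^ K \<in> {1, -1}"
      using power_K_cases nz by auto
  qed (use U nz s in \<open>auto simp: z1_def z2_def z3_def\<close>)
  moreover have "\<not> (a ^ K = b ^ K \<and> (z2 = z1 \<or> z2 = - z1))"
    using twist_eq_imp_eq[OF nz(1,2) s(1,2)] d unfolding z1_def z2_def by (metis minus_minus)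
  moreover have "\<not> (a ^ K = c ^ K \<and> (z3 = z1 \<or> z3 = - z1))"
    using twist_eq_imp_eq[OF nz(1,3) s(1,3)] d unfolding z1_def z3_def by (metis minus_minus)
  moreover have "\<not> (b ^ K = c ^ K \<and> (z3 = z2 \<or> z3 = - z2))"
    using twist_eq_imp_eq[OF nz(2,3) s(2,3)] d unfolding z2_def z3_def by (metis minus_minus)
  ultimately show False by blast
qed

lemma prime_subfield_diff: "x \<in> prime_subfield \<Longrightarrow> y \<in> prime_subfield \<Longrightarrow> x - y \<in> (prime_subfield :: 'a set)"
  using prime_subfield_add[of x "- y"] by (auto simp: prime_subfield_eq)

lemma prime_words_diff:
  "c \<in> prime_words k \<Longrightarrow> d \<in> prime_words k \<Longrightarrow> c - d \<in> (prime_words k :: (nat \<Rightarrow> 'a) set)"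
  unfolding prime_words_def by (simp add: prime_subfield_diff)

definition eval_word :: "nat \<Rightarrow> (nat \<Rightarrow> 'a) \<Rightarrow> 'a" where
  "eval_word w c = (\<Sum>i<n. c i * p ^ (w * i))"

definition syndrome :: "(nat \<Rightarrow> 'a) \<Rightarrow> 'a \<times> 'a" where
  "syndrome c = (eval_word U c, eval_word V c)"

abbreviation code :: "(nat \<Rightarrow> 'a) set" where
  "code \<equiv> cyclic_code_uv n p U V"

lemma code_eq: "code = {c \<in> prime_words n. syndrome c = 0}"
  unfolding cyclic_code_uv_def prime_words_def syndrome_def eval_word_def zero_prod_def by auto

lemma eval_word_add: "eval_word w (c + d) = eval_word w c + eval_word w d"
  unfolding eval_word_def by (simp add: sum.distrib distrib_right)

lemma eval_word_diff: "eval_word w (c - d) = eval_word w c - eval_word w d"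
  unfolding eval_word_def by (simp add: sum_subtractf left_diff_distrib)

lemma syndrome_diff: "syndrome (c - d) = syndrome c - syndrome d"
  unfolding syndrome_def by (simp add: eval_word_diff)

lemma code_diff: "c \<in> code \<Longrightarrow> d \<in> code \<Longrightarrow> c - d \<in> code"
  unfolding code_eq by (auto simp: prime_words_diff syndrome_diff)

lemma eval_word_support:
  assumes "c \<in> prime_words n"
  shows "eval_word w c = (\<Sum>i | i < n \<and> c i \<noteq> 0. c i * (p ^ i) ^ w)"
  unfolding eval_word_def
  by (rule sum.mono_neutral_cong_right) (auto simp: power_mult[symmetric] mult.commute)

lemma code_weight_ge_4:
  assumes "c \<in> code" "c \<noteq> 0"
  shows "4 \<le> hamming_dist n c 0"
proof (rule ccontr)
  define S where "S = {i. i < n \<and> c i \<noteq> 0}"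
  assume "\<not> 4 \<le> hamming_dist n c 0"
  hence "card S \<le> 3" unfolding S_def hamming_dist_def by simp
  have cW: "c \<in> prime_words n" and "syndrome c = 0" using assms(1) code_eq by auto
  hence sum_U: "(\<Sum>i\<in>S. c i * (p ^ i) ^ U) = 0" and sum_V: "(\<Sum>i\<in>S. c i * (p ^ i) ^ V) = 0"
    using eval_word_support[OF cW] unfolding S_def syndrome_def zero_prod_def by simp_all
  have "S \<noteq> {}"
  proof
    assume "S = {}"
    hence "c i = 0" for i using cW unfolding S_def prime_words_def by (cases "i < n") auto
    thus False using assms(2) by (simp add: fun_eq_iff)
  qed
  moreover have "finite S" unfolding S_def by simp
  ultimately have "0 < card S" by (simp add: card_gt_0_iff)
  hence "card S = 1 \<or> card S = 2 \<or> card S = 3"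
    using \<open>card S \<le> 3\<close> by arith
  moreover have signs: "c i \<in> {1, -1}" if "i \<in> S" for i
    using cW that unfolding S_def prime_words_def prime_subfield_eq by auto
  moreover have distinct: "p ^ i \<noteq> p ^ j" if "i \<in> S" "j \<in> S" "i \<noteq> j" for i j
    using that power_inj_on unfolding S_def by (auto dest: inj_onD)
  moreover have "p ^ i \<noteq> 0" for i using nonzero by simp
  ultimately show False
  proof (elim disjE)
    assume "card S = 1"
    then obtain x where "S = {x}" by (auto simp: card_1_singleton_iff)
    thus False using sum_U signs nonzero by auto
  next
    assume "card S = 2"
    then obtain x y where "S = {x, y}" "x \<noteq> y" by (auto simp: card_2_iff)
    show False
      by (rule no_signed_relation_2[of "p ^ x" "p ^ y" "c x" "c y"])
        (use \<open>S = {x, y}\<close> \<open>x \<noteq> y\<close> sum_U sum_V signs distinct nonzero in auto)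
  next
    assume "card S = 3"
    then obtain x y z where "S = {x, y, z}" "x \<noteq> y" "y \<noteq> z" "x \<noteq> z"
      by (auto simp: card_3_iff)
    show False
      by (rule no_signed_relation_3[of "p ^ x" "p ^ y" "p ^ z" "c x" "c y" "c z"])
        (use \<open>S = {x, y, z}\<close> \<open>x \<noteq> y\<close> \<open>y \<noteq> z\<close> \<open>x \<noteq> z\<close>
          sum_U sum_V signs distinct nonzero in \<open>auto simp: add.assoc\<close>)
  qed
qed

abbreviation syndromes :: "('a \<times> 'a) set" where
  "syndromes \<equiv> syndrome ` prime_words n"

lemma syndrome_add: "syndrome (c + d) = syndrome c + syndrome d"
  unfolding syndrome_def by (simp add: eval_word_add)

lemma syndromes_add:
  assumes "s \<in> syndromes" "t \<in> syndromes"
  shows "s + t \<in> syndromes"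
proof -
  obtain c d where c: "c \<in> prime_words n" "s = syndrome c" and d: "d \<in> prime_words n" "t = syndrome d"
    using assms by blast
  have "s + t = syndrome (c + d)" unfolding c(2) d(2) syndrome_add ..
  moreover have "c + d \<in> prime_words n" using c(1) d(1) by (rule prime_words_add)
  ultimately show ?thesis by (rule image_eqI)
qed

lemma syndrome_0: "syndrome 0 = 0"
  unfolding syndrome_def eval_word_def zero_prod_def by simp

lemma syndromes_zero: "0 \<in> syndromes"
  by (rule image_eqI[where x = 0]) (simp_all add: syndrome_0 zero_in_prime_words)

lemma syndromes_sum: "finite A \<Longrightarrow> (\<And>j. j \<in> A \<Longrightarrow> f j \<in> syndromes) \<Longrightarrow> sum f A \<in> syndromes"
proof (induction A rule: finite_induct)
  case empty
  show ?case using syndromes_zero by simp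
next
  case (insert j A)
  have "f j \<in> syndromes" "sum f A \<in> syndromes" using insert by simp_all
  hence "f j + sum f A \<in> syndromes" by (rule syndromes_add)
  thus ?case using insert(1,2) by simp
qed

lemma syndromes_monomial:
  assumes "g \<in> prime_subfield"
  shows "(g * p ^ (U * k), g * p ^ (V * k)) \<in> syndromes"
proof -
  define c where "c = (\<lambda>i. if i = k mod n then g else 0)"
  have "k mod n < n" using n_pos by simp
  have "eval_word w c = g * p ^ (w * k)" for w
  proof -
    have "eval_word w c = (\<Sum>i<n. if i = k mod n then g * p ^ (w * i) else 0)"
      unfolding eval_word_def c_def by (intro sum.cong) auto
    also have "\<dots> = g * p ^ (w * (k mod n))"
      using \<open>k mod n < n\<close> by simp
    also have "p ^ (w * (k mod n)) = p ^ (w * k)"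
      by (simp only: power_eq_power_iff mod_mult_right_eq)
    finally show ?thesis .
  qed
  hence "(g * p ^ (U * k), g * p ^ (V * k)) = syndrome c"
    unfolding syndrome_def by simp
  moreover have "c \<in> prime_words n"
    unfolding prime_words_def c_def using assms zero_in_prime_subfield \<open>k mod n < n\<close> by auto
  ultimately show ?thesis by (rule image_eqI)
qed

lemma syndromes_scale:
  assumes "(a, b) \<in> syndromes" "g \<in> prime_subfield"
  shows "(g * p ^ (U * k) * a, g * p ^ (V * k) * b) \<in> syndromes"
proof -
  obtain c where c: "c \<in> prime_words n" "(a, b) = syndrome c" using assms(1) by blast
  have shift: "g * p ^ (w * k) * eval_word w c = (\<Sum>i<n. g * c i * p ^ (w * (i + k)))" for w
    unfolding eval_word_def by (simp add: sum_distrib_left algebra_simps power_add)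
  have "g * c i \<in> prime_subfield" for i
    using c(1) assms(2) unfolding prime_words_def by (simp add: prime_subfield_mult)
  hence "(\<Sum>i<n. (g * c i * p ^ (U * (i + k)), g * c i * p ^ (V * (i + k)))) \<in> syndromes"
    by (intro syndromes_sum syndromes_monomial) simp_all
  thus ?thesis
    using c(2) unfolding sum_prod shift[symmetric] syndrome_def by simp
qed

lemma syndromes_snd: "\<exists>a. (a, y) \<in> syndromes"
proof (cases "y = 0")
  case True
  thus ?thesis using syndromes_zero by (auto simp: zero_prod_def)
next
  case False
  then obtain j where j: "y = p ^ j" using primitive unfolding is_primitive_def by auto
  have "(1 * p ^ (U * (j * V')), 1 * p ^ (V * (j * V'))) \<in> syndromes"
    by (rule syndromes_monomial[OF one_in_prime_subfield])
  moreover have "p ^ (V * (j * V')) = ((p ^ j) ^ V) ^ V'"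
    by (simp only: power_mult[symmetric] mult_ac)
  ultimately have "(p ^ (U * (j * V')), y) \<in> syndromes"
    using power_V_V'[of "p ^ j"] j by simp
  thus ?thesis by blast
qed

lemma syndromes_fst:
  assumes "a \<noteq> 0" "(a, 0) \<in> syndromes"
  shows "(x, 0) \<in> syndromes"
proof (cases "x = 0")
  case True
  thus ?thesis using syndromes_zero by (simp add: zero_prod_def)
next
  case False
  then obtain j where j: "x / a = p ^ j"
    using assms(1) primitive unfolding is_primitive_def by (metis divide_eq_0_iff)
  have "(-1) ^ j \<in> (prime_subfield :: 'a set)"
    unfolding prime_subfield_eq by (cases "even j") auto
  hence "((-1) ^ j * p ^ (U * j) * a, (-1) ^ j * p ^ (V * j) * 0) \<in> syndromes"
    by (rule syndromes_scale[OF assms(2)])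
  moreover have "(-1) ^ j * p ^ (U * j) = ((-1) * (- p)) ^ j"
    by (simp only: power_mult power_U power_mult_distrib)
  hence "(-1) ^ j * p ^ (U * j) = p ^ j" by simp
  ultimately show ?thesis
    using j assms(1) by (simp add: field_simps)
qed

lemma ternary_poly_eq_0:
  assumes coeff: "\<And>i. coeff f i \<in> prime_subfield" and "degree f \<le> m"
    and root_U: "poly f (p ^ U) = 0" and "poly f (p ^ V) = 0"
  shows "f = 0"
proof (rule ccontr)
  assume f_nz: "f \<noteq> 0"
  have root_V: "poly f ((p ^ V) ^ (3 ^ j)) = 0" for j
  proof -
    have "poly f ((p ^ V) ^ (3 ^ j)) = poly f (p ^ V) ^ (3 ^ j)"
      unfolding poly_altdef by (rule frobenius_polynomial[OF coeff, symmetric])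
    also have "poly f (p ^ V) = 0" by fact
    finally show ?thesis by simp
  qed
  define R where "R = insert (p ^ U) ((\<lambda>j. (p ^ V) ^ (3 ^ j)) ` {..<m})"
  have "R \<subseteq> {x. poly f x = 0}"
    unfolding R_def using root_U root_V by blast
  hence "card R \<le> card {x. poly f x = 0}"
    by (rule card_mono[OF poly_roots_finite[OF f_nz]])
  also have "\<dots> \<le> degree f"
    by (rule card_poly_roots_bound[OF f_nz])
  finally have "card R \<le> m"
    using \<open>degree f \<le> m\<close> by simp
  moreover have "p ^ U \<notin> (\<lambda>j. (p ^ V) ^ (3 ^ j)) ` {..<m}"
  proof
    assume "p ^ U \<in> (\<lambda>j. (p ^ V) ^ (3 ^ j)) ` {..<m}"
    then obtain j where "p ^ U = (p ^ V) ^ (3 ^ j)" by blast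
    from this[symmetric] conjugates_V_neq_U[of j] show False by contradiction
  qed
  hence "card R = card ((\<lambda>j. (p ^ V) ^ (3 ^ j)) ` {..<m}) + 1"
    unfolding R_def using card_insert_disjoint by simp
  hence "card R = m + 1"
    using card_image[OF inj_on_conjugates_V] by simp
  ultimately show False by simp
qed

lemma eval_word_U_neq_0:
  assumes e: "e \<in> prime_words (m + 1)" "e \<noteq> 0" and V: "eval_word V e = 0"
  shows "eval_word U e \<noteq> 0"
proof
  assume U: "eval_word U e = 0"
  define f where "f = (\<Sum>i\<le>m. monom (e i) i)"
  have e_zero: "\<And>i. m < i \<Longrightarrow> e i = 0"
    using e(1) unfolding prime_words_def by auto
  have coeff_f: "coeff f i = e i" for i
    unfolding f_def using e_zero[of i] by (auto simp: coeff_sum)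
  have "eval_word w e = poly f (p ^ w)" for w
  proof -
    have "eval_word w e = (\<Sum>i\<le>m. e i * p ^ (w * i))" unfolding eval_word_def
      by (rule sum.mono_neutral_right) (use Suc_two_m_le_n e_zero in auto)
    thus ?thesis unfolding f_def by (simp add: poly_sum poly_monom power_mult)
  qed
  moreover have "degree f \<le> m" unfolding f_def
    by (rule degree_sum_le) (auto intro: order_trans[OF degree_monom_le])
  moreover have "coeff f i \<in> prime_subfield" for i
    using e(1) unfolding coeff_f prime_words_def by simp
  ultimately have "f = 0"
    using U V by (intro ternary_poly_eq_0) simp_all
  hence "e = 0" using coeff_f by (metis coeff_0 ext zero_fun_def)
  thus False using e(2) by contradiction
qed

lemma syndromes_fst_nonzero: "\<exists>a. a \<noteq> 0 \<and> (a, 0) \<in> syndromes"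
proof -
  have "\<not> inj_on (eval_word V) (prime_words (m + 1))"
  proof
    assume "inj_on (eval_word V) (prime_words (m + 1))"
    hence "card (prime_words (m + 1) :: (nat \<Rightarrow> 'a) set) \<le> card (UNIV :: 'a set)"
      by (rule card_inj_on_le) auto
    thus False using card_eq by (simp add: card_prime_words card_prime_subfield)
  qed
  then obtain c d where cd: "c \<in> prime_words (m + 1)" "d \<in> prime_words (m + 1)" "c \<noteq> d"
    and eq: "eval_word V c = eval_word V d"
    unfolding inj_on_def by auto
  have "c - d \<in> prime_words (m + 1)" using cd(1,2) by (rule prime_words_diff)
  moreover have "c - d \<noteq> 0" "eval_word V (c - d) = 0"
    using cd(3) eq by (simp_all add: eval_word_diff)
  ultimately have "eval_word U (c - d) \<noteq> 0" by (rule eval_word_U_neq_0)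
  moreover have "(eval_word U (c - d), 0) = syndrome (c - d)"
    unfolding syndrome_def using \<open>eval_word V (c - d) = 0\<close> by simp
  moreover have "c - d \<in> prime_words n"
    using prime_words_mono[of "m + 1" n] Suc_two_m_le_n \<open>c - d \<in> prime_words (m + 1)\<close> by auto
  ultimately show ?thesis by blast
qed

lemma syndromes_eq_UNIV: "syndromes = UNIV"
proof (intro set_eqI iffI UNIV_I)
  fix s :: "'a \<times> 'a"
  obtain a where a: "a \<noteq> 0" "(a, 0) \<in> syndromes" using syndromes_fst_nonzero by blast
  obtain b where b: "(b, snd s) \<in> syndromes" using syndromes_snd by blast
  have "(fst s - b, 0) \<in> syndromes" using a by (rule syndromes_fst)
  from syndromes_add[OF this b] show "s \<in> syndromes" by simp
qed

lemma card_code: "card code = 3 ^ (n - 2 * m)"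
proof -
  have "card (prime_words n :: (nat \<Rightarrow> 'a) set)
      = card syndromes * card {c \<in> prime_words n. syndrome c = 0}"
    by (rule card_eq_card_image_mult_card_kernel)
      (simp_all add: finite_prime_words prime_words_diff syndrome_diff)
  moreover have "card (prime_words n :: (nat \<Rightarrow> 'a) set) = 3 ^ n"
    by (simp add: card_prime_words card_prime_subfield)
  moreover have "card syndromes = 3 ^ (2 * m)"
    unfolding syndromes_eq_UNIV
    by (simp add: card_eq card_cartesian_product power_add mult_2 flip: UNIV_Times_UNIV)
  moreover have "{c \<in> prime_words n. syndrome c = 0} = code"
    by (rule code_eq[symmetric])
  ultimately have "3 ^ (2 * m) * 3 ^ (n - 2 * m) = 3 ^ (2 * m) * card code"
    using Suc_two_m_le_n by (simp flip: power_add)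
  thus ?thesis by simp
qed

text \<open>Words of weight at most two with entries \<open>\<plusminus>1\<close>, normalised (first entry \<open>1\<close> if \<open>i < j\<close>,
  \<open>-1\<close> if \<open>j < i\<close>) so that distinct parameters give distinct words.\<close>
definition low_weight_word :: "nat \<Rightarrow> nat \<Rightarrow> 'a \<Rightarrow> nat \<Rightarrow> 'a" where
  "low_weight_word i j s = (\<lambda>k. if i < j then (if k = i then 1 else if k = j then s else 0)
     else if j < i then (if k = j then -1 else if k = i then s else 0)
     else (if k = i then s else 0))"

lemma low_weight_word_eq_0: "k \<noteq> i \<Longrightarrow> k \<noteq> j \<Longrightarrow> low_weight_word i j s k = 0"
  unfolding low_weight_word_def by simp

lemma low_weight_word_in_prime_words:
  assumes "i < n" "j < n" "s \<in> {1, -1}"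
  shows "low_weight_word i j s \<in> prime_words n"
proof -
  have "low_weight_word i j s k \<in> prime_subfield" for k
    unfolding low_weight_word_def prime_subfield_eq using assms(3) by auto
  moreover have "low_weight_word i j s k = 0" if "n \<le> k" for k
    using that assms(1,2) by (intro low_weight_word_eq_0) auto
  ultimately show ?thesis unfolding prime_words_def by simp
qed

lemma inj_on_low_weight_word:
  "inj_on (\<lambda>(i, j, s). low_weight_word i j s) (UNIV \<times> UNIV \<times> {1, -1})"
proof (rule inj_onI)
  fix x y :: "nat \<times> nat \<times> 'a"
  assume "x \<in> UNIV \<times> UNIV \<times> {1, -1}" "y \<in> UNIV \<times> UNIV \<times> {1, -1}"
    and "(\<lambda>(i, j, s). low_weight_word i j s) x = (\<lambda>(i, j, s). low_weight_word i j s) y"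
  then obtain i j s i' j' s' where xy: "x = (i, j, s)" "y = (i', j', s')"
    and s: "s \<in> {1, -1}" "s' \<in> {1, -1}" and eq: "low_weight_word i j s = low_weight_word i' j' s'"
    by (cases x, cases y) auto
  have "s \<noteq> 0" "s' \<noteq> 0" "(1::'a) \<noteq> -1" "(-1::'a) \<noteq> 1"
    using s one_neq_minus_1 by auto
  moreover have "low_weight_word i j s k = low_weight_word i' j' s' k" for k
    using eq by simp
  note this[of i] this[of j] this[of i'] this[of j']
  ultimately have "i = i' \<and> j = j' \<and> s = s'"
    unfolding low_weight_word_def by (auto split: if_splits)
  thus "x = y" unfolding xy by simp
qed

lemma hamming_dist_low_weight_word_diff:
  "hamming_dist n (low_weight_word i j s - low_weight_word i' j' s') 0 \<le> 4"
proof -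
  have "{k. k < n \<and> (low_weight_word i j s - low_weight_word i' j' s') k \<noteq> 0} \<subseteq> {i, j, i', j'}"
    using low_weight_word_eq_0 by fastforce
  hence "hamming_dist n (low_weight_word i j s - low_weight_word i' j' s') 0 \<le> card {i, j, i', j'}"
    unfolding hamming_dist_def by (intro card_mono) auto
  also have "card {i, j, i', j'} \<le> 4"
    by (auto simp: card_insert_if)
  finally show ?thesis .
qed

definition low_weight_words :: "(nat \<Rightarrow> 'a) set" where
  "low_weight_words = (\<lambda>(i, j, s). low_weight_word i j s) ` ({..<n} \<times> {..<n} \<times> {1, -1})"

lemma card_low_weight_words: "card low_weight_words = n * (n * 2)"
proof -
  have "inj_on (\<lambda>(i, j, s). low_weight_word i j s) ({..<n} \<times> {..<n} \<times> {1, -1})"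
    by (rule inj_on_subset[OF inj_on_low_weight_word]) auto
  moreover have "card {1, -1::'a} = 2" using one_neq_minus_1 by simp
  ultimately show ?thesis
    unfolding low_weight_words_def by (simp add: card_image card_cartesian_product)
qed

lemma code_subset_prime_words: "code \<subseteq> prime_words n"
  unfolding code_eq by blast

lemma card_code_pos: "0 < card code"
proof -
  have "0 \<in> code"
    unfolding code_eq using syndrome_0 zero_in_prime_words by simp
  thus ?thesis
    using finite_subset[OF code_subset_prime_words finite_prime_words] by (auto simp: card_gt_0_iff)
qed

text \<open>The sphere-packing count \<open>(n + 1)\<^sup>2 |C| = 3^n < 2 n\<^sup>2 |C|\<close>.\<close>
lemma card_prime_words_less: "card (prime_words n :: (nat \<Rightarrow> 'a) set) < card code * card low_weight_words"
proof -
  have "(3::nat) ^ n = 3 ^ m * 3 ^ m * 3 ^ (n - 2 * m)"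
    using Suc_two_m_le_n by (simp flip: power_add)
  also have "\<dots> = (n + 1) * (n + 1) * card code"
    by (simp only: n_plus_1[symmetric] card_code)
  also have "\<dots> < n * (n * 2) * card code"
  proof (rule mult_strict_right_mono[OF _ card_code_pos])
    have "3 * n \<le> n * n" "3 \<le> n" using Suc_two_m_le_n m_eq by simp_all
    thus "(n + 1) * (n + 1) < n * (n * 2)" by (simp add: algebra_simps, linarith)
  qed
  finally show ?thesis
    by (simp add: card_prime_words card_prime_subfield card_low_weight_words mult.commute)
qed

lemma code_exists_weight_le_4: "\<exists>c\<in>code. c \<noteq> 0 \<and> hamming_dist n c 0 \<le> 4"
proof -
  have sum_in: "c + e \<in> prime_words n"
    if c_in: "c \<in> code" and e_in: "e \<in> low_weight_words" for c e
  proof (rule prime_words_add)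
    show "c \<in> prime_words n" using c_in code_subset_prime_words by blast
    obtain t where "t \<in> {..<n} \<times> {..<n} \<times> {1, -1}" "e = (\<lambda>(i, j, s). low_weight_word i j s) t"
      using e_in unfolding low_weight_words_def by (rule imageE)
    thus "e \<in> prime_words n"
      by (cases t) (simp add: low_weight_word_in_prime_words)
  qed
  obtain c c' e e' where c: "c \<in> code" "c' \<in> code" and e: "e \<in> low_weight_words"
    "e' \<in> low_weight_words" and "e \<noteq> e'" and diff: "c - c' = e' - e"
    using sum_collision_of_card_lt[OF finite_prime_words sum_in card_prime_words_less] by blast
  have "c - c' \<in> code" using c by (rule code_diff)
  moreover have "c - c' \<noteq> 0" using diff \<open>e \<noteq> e'\<close> by simp
  moreover have "hamming_dist n (c - c') 0 \<le> 4"
    using e unfolding diff low_weight_words_def by (auto simp: hamming_dist_low_weight_word_diff)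
  ultimately show ?thesis by blast
qed

lemma min_dist_code: "min_dist n code = 4"
proof -
  obtain c where c: "c \<in> code" "c \<noteq> 0" "hamming_dist n c 0 \<le> 4"
    using code_exists_weight_le_4 by blast
  show ?thesis
    by (rule min_dist_eqI[OF code_diff code_weight_ge_4 c])
qed

lemma U_eq: "U = (3 ^ m + 1) div 2"
proof -
  have "2 * U = n + 2" using two_K by simp
  hence "3 ^ m + 1 = 2 * U" using n_plus_1 by simp
  thus ?thesis by simp
qed

end

theorem theorem1:
  fixes l m u v :: nat and p :: "'a::{field,finite}"
  assumes "l \<ge> 1"
    and "m = 2 * l + 1"
    and "u = (3 ^ m + 1) div 2"
    and "v = 2 * 3 ^ l + 1"
    and "card (UNIV :: 'a set) = 3 ^ m"
    and "is_primitive p"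
  shows "\<not> conjugate_GF3 (p ^ u) (p ^ v)
       \<and> card (cyclic_code_uv (3 ^ m - 1) p u v) = 3 ^ (3 ^ m - 1 - 2 * m)
       \<and> min_dist (3 ^ m - 1) (cyclic_code_uv (3 ^ m - 1) p u v) = 4"
proof -
  interpret gf3_odd_degree p "3 ^ m - 1" m l
    by unfold_locales (use assms in simp_all)
  have "u = U" using assms(3) U_eq by simp
  thus ?thesis
    using assms(4) not_conjugate_U_V card_code min_dist_code by simp
qed

end
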